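(* Let $s,q\in\mathbb N$, $c\in\mathbb R^s$, $C:=\mathrm{diag}(c_1,\dots,c_s)$, and let $K_n\in\mathbb R^{s\times s}$ satisfy $$(c^{l-1})^{\mathsf T}K_n=\mathbb 1^{\mathsf T}K_nC^{l-1},\qquad l=1,\dots,q.$$ Then for every $k\in\mathbb N$ the matrices $V_q^{\mathsf T}K_nV_k$ and $\mathcal L_{q,k}(V_q^{\mathsf T}K_nV_k)$ have Hankel form.
   Context: $\mathbb 1\in\mathbb R^s$ is the all-ones vector; powers of vectors are componentwise. $V_k:=(\mathbb 1,c,\dots,c^{k-1})\in\mathbb R^{s\times k}$, $\tilde E_k:=(i\,\delta_{i+1,j})_{i,j=1}^k$, and $\mathcal L_{q,k}(X):=\tilde E_q^{\mathsf T}X+X\tilde E_k$ for $X\in\mathbb R^{q\times k}$. A matrix $X=(x_{ij})$ has Hankel form if $x_{ij}$ depends only on $i+j$. *)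

theory Defs
  imports "Jordan_Normal_Form.Matrix"
begin

text \<open>All matrices use 0-based indices (JNF convention). c is a real vector of dimension s.\<close>

definition vpow :: "real vec \<Rightarrow> nat \<Rightarrow> real vec" where
  "vpow c m = vec (dim_vec c) (\<lambda>i. (c $ i) ^ m)"

definition row_mat :: "real vec \<Rightarrow> real mat" where
  "row_mat v = mat 1 (dim_vec v) (\<lambda>(i,j). v $ j)"

definition diagC :: "real vec \<Rightarrow> real mat" where
  "diagC c = mat (dim_vec c) (dim_vec c) (\<lambda>(i,j). if i = j then c $ i else 0)"

definition Vmat :: "real vec \<Rightarrow> nat \<Rightarrow> real mat" where
  "Vmat c k = mat (dim_vec c) k (\<lambda>(i,j). (c $ i) ^ j)"

text \<open>E~_k = (i delta_{i+1,j})_{i,j=1..k}; in 0-based indices entry (i,j) = i+1 if j = i+1.\<close>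
definition Etil :: "nat \<Rightarrow> real mat" where
  "Etil k = mat k k (\<lambda>(i,j). if j = i + 1 then real (i + 1) else 0)"

definition Lop :: "nat \<Rightarrow> nat \<Rightarrow> real mat \<Rightarrow> real mat" where
  "Lop q k X = transpose_mat (Etil q) * X + X * Etil k"

definition hankel_form :: "real mat \<Rightarrow> bool" where
  "hankel_form X \<longleftrightarrow> (\<forall>i j i' j'. i < dim_row X \<longrightarrow> j < dim_col X \<longrightarrow>
     i' < dim_row X \<longrightarrow> j' < dim_col X \<longrightarrow> i + j = i' + j' \<longrightarrow> X $$ (i,j) = X $$ (i',j'))"

end

theory Submission
  imports Defs
begin

text \<open>
  Let \<open>w\<close> be the vector of column sums of \<open>K\<close>. Read entrywise, the hypothesis says
  \<open>(\<Sum>a. c\<^sub>a ^ i * K\<^sub>a\<^sub>b) = w\<^sub>b * c\<^sub>b ^ i\<close> for \<open>i < q\<close>, so the \<open>(i,j)\<close> entry of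
  \<open>V\<^sub>q\<^sup>T K V\<^sub>k\<close> is the moment \<open>\<Sum>b. w\<^sub>b * c\<^sub>b ^ (i + j)\<close>, which depends only on \<open>i + j\<close>.
  The operator \<open>Lop q k\<close> maps a Hankel matrix with entries \<open>h (i + j)\<close> to one with entries
  \<open>(i + j) * h (i + j - 1)\<close>, because multiplication by the transposed \<open>Etil q\<close> on the left and by
  \<open>Etil k\<close> on the right shifts rows and columns with weights \<open>i\<close> and \<open>j\<close>.
\<close>

lemma hankel_formI:
  assumes "X \<in> carrier_mat q k" and "\<And>i j. i < q \<Longrightarrow> j < k \<Longrightarrow> X $$ (i,j) = h (i + j)"
  shows "hankel_form X"
  using assms unfolding hankel_form_def by auto

lemma Etil_carrier [simp]: "Etil k \<in> carrier_mat k k"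
  by (simp add: Etil_def)

text \<open>At \<open>i = 0\<close> (resp. \<open>j = 0\<close>) the truncated index \<open>0 - 1 = 0\<close> is harmless: its weight is \<open>0\<close>.\<close>

lemma transpose_Etil_mult_index:
  assumes "A \<in> carrier_mat q k" "i < q" "j < k"
  shows "(transpose_mat (Etil q) * A) $$ (i,j) = real i * A $$ (i - 1, j)"
proof -
  have "(transpose_mat (Etil q) * A) $$ (i,j)
      = (\<Sum>m\<in>{0..<q}. if m = i - 1 \<and> 0 < i then real i * A $$ (m,j) else 0)"
    using assms by (auto simp: Etil_def scalar_prod_def intro!: sum.cong)
  then show ?thesis
    using assms(2) by (cases i) (simp_all add: sum.delta')
qed

lemma mult_Etil_index:
  assumes "A \<in> carrier_mat q k" "i < q" "j < k"
  shows "(A * Etil k) $$ (i,j) = real j * A $$ (i, j - 1)"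
proof -
  have "(A * Etil k) $$ (i,j)
      = (\<Sum>m\<in>{0..<k}. if m = j - 1 \<and> 0 < j then real j * A $$ (i,m) else 0)"
    using assms by (auto simp: Etil_def scalar_prod_def intro!: sum.cong)
  then show ?thesis
    using assms(3) by (cases j) (simp_all add: sum.delta')
qed

lemma Lop_hankel_index:
  assumes X: "X \<in> carrier_mat q k" and h: "\<And>i j. i < q \<Longrightarrow> j < k \<Longrightarrow> X $$ (i,j) = h (i + j)"
    and "i < q" "j < k"
  shows "Lop q k X $$ (i,j) = real (i + j) * h (i + j - 1)"
proof -
  have "Lop q k X $$ (i,j) = real i * X $$ (i - 1, j) + real j * X $$ (i, j - 1)"
    using X assms(3,4) carrier_matD[OF X] carrier_matD[OF Etil_carrier]
    by (simp add: Lop_def transpose_Etil_mult_index mult_Etil_index del: index_mult_mat(1))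
  also have "\<dots> = real (i + j) * h (i + j - 1)"
    using h[of "i - 1" j] h[of i "j - 1"] assms(3,4) by (cases i; cases j) (auto simp: algebra_simps)
  finally show ?thesis .
qed

lemma hankel_form_Lop:
  assumes X: "X \<in> carrier_mat q k" and h: "\<And>i j. i < q \<Longrightarrow> j < k \<Longrightarrow> X $$ (i,j) = h (i + j)"
  shows "hankel_form (Lop q k X)"
proof (rule hankel_formI)
  show "Lop q k X \<in> carrier_mat q k"
    using X by (simp add: Lop_def)
qed (rule Lop_hankel_index[OF X h])

lemma diagC_power: "diagC c ^\<^sub>m n = diagC (vpow c n)"
proof (induction n)
  case 0
  show ?case by (rule eq_matI) (auto simp: diagC_def vpow_def)
next
  case (Suc n)
  have "diagC c ^\<^sub>m Suc n = diagC (vpow c n) * diagC c"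
    by (simp add: Suc)
  also have "\<dots> = diagC (vpow c (Suc n))"
    by (rule eq_matI)
      (auto simp: diagC_def vpow_def scalar_prod_def if_distrib[of "\<lambda>x. x * _"] sum.delta'
        cong: if_cong intro!: sum.neutral)
  finally show ?case .
qed

lemma column_moment_condition:
  assumes "dim_vec c = s" "K \<in> carrier_mat s s" "b < s"
    and "row_mat (vpow c i) * K = row_mat (vec s (\<lambda>_. 1)) * K * (diagC c ^\<^sub>m i)"
  shows "(\<Sum>a\<in>{0..<s}. c $ a ^ i * K $$ (a,b)) = (\<Sum>a\<in>{0..<s}. K $$ (a,b)) * c $ b ^ i"
proof -
  have "(row_mat (vpow c i) * K) $$ (0,b) = (row_mat (vec s (\<lambda>_. 1)) * K * diagC c ^\<^sub>m i) $$ (0,b)"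
    using assms(4) by simp
  then show ?thesis
    using assms(1-3) unfolding diagC_power
    by (simp add: row_mat_def vpow_def diagC_def scalar_prod_def
        if_distrib sum.delta' cong: if_cong)
qed

lemma Vmat_transpose_mult_index:
  assumes "K \<in> carrier_mat (dim_vec c) (dim_vec c)" "i < q" "j < k"
  shows "(transpose_mat (Vmat c q) * K * Vmat c k) $$ (i,j)
     = (\<Sum>b\<in>{0..<dim_vec c}. (\<Sum>a\<in>{0..<dim_vec c}. c $ a ^ i * K $$ (a,b)) * c $ b ^ j)"
  using assms
  by (simp add: Vmat_def scalar_prod_def sum_distrib_right mult.commute mult.left_commute)

theorem lemma4p4:
  fixes s q :: nat and c :: "real vec" and K :: "real mat"
  assumes "dim_vec c = s"
    and "K \<in> carrier_mat s s"
    and "\<forall>l\<in>{1..q}. row_mat (vpow c (l - 1)) * K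
            = row_mat (vec s (\<lambda>_. 1)) * K * (diagC c ^\<^sub>m (l - 1))"
  shows "\<forall>k::nat. hankel_form (transpose_mat (Vmat c q) * K * Vmat c k)
           \<and> hankel_form (Lop q k (transpose_mat (Vmat c q) * K * Vmat c k))"
proof
  fix k
  define X where "X = transpose_mat (Vmat c q) * K * Vmat c k"
  define moment where "moment n = (\<Sum>b\<in>{0..<s}. (\<Sum>a\<in>{0..<s}. K $$ (a,b)) * c $ b ^ n)" for n
  have X_carrier: "X \<in> carrier_mat q k"
    using assms(1,2) unfolding X_def Vmat_def by auto
  have X_index: "X $$ (i,j) = moment (i + j)" if "i < q" "j < k" for i j
  proof -
    have "row_mat (vpow c i) * K = row_mat (vec s (\<lambda>_. 1)) * K * (diagC c ^\<^sub>m i)"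
      using assms(3)[rule_format, of "Suc i"] that(1) by simp
    then show ?thesis
      using assms(1,2) that
      by (simp add: X_def moment_def Vmat_transpose_mult_index column_moment_condition
          power_add mult.assoc)
  qed
  show "hankel_form X \<and> hankel_form (Lop q k X)"
    using hankel_formI[OF X_carrier X_index] hankel_form_Lop[OF X_carrier X_index] by blast
qed

end
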